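(* Let $g\ge0$, $n\ge1$, $G\in\mathbb{G}_{g,n}$, and let $T_1,T_2$ be tails of $G$. If $T_1\cap T_2\ne\emptyset$, then either one of $T_1,T_2$ contains the other, or $T_1\cup T_2=G$.
   Context: $\mathbb{G}_{g,n}$ is the set of isomorphism classes of dual graphs of stable $n$-pointed curves of genus $g$: connected graphs with vertex genera and $n$ labelled legs, of total genus $g$, each vertex stable. A tail of $G$ is a connected vertex-induced subgraph $T$ (i.e. determined by a vertex set, containing all edges of $G$ with both ends in it and the legs rooted in it) that is joined to its complement by exactly one edge of $G$. *)

theory Defs
  imports Main
begin

text \<open>A graph with legs is given by a vertex set V, an edge set E, an endpoint map
  ends (ends e has one element for a loop, two for an ordinary edge), a genus
  function gen on vertices and a leg map leg assigning to each label i in {1..n}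
  the vertex it is rooted in.\<close>

definition adj_in :: "'e set \<Rightarrow> ('e \<Rightarrow> 'v set) \<Rightarrow> 'v set \<Rightarrow> ('v \<times> 'v) set" where
  "adj_in E ends S = {(x, y). x \<in> S \<and> y \<in> S \<and> (\<exists>e\<in>E. ends e = {x, y})}"

definition connected_on :: "'e set \<Rightarrow> ('e \<Rightarrow> 'v set) \<Rightarrow> 'v set \<Rightarrow> bool" where
  "connected_on E ends S \<longleftrightarrow> S \<noteq> {} \<and> (\<forall>x\<in>S. \<forall>y\<in>S. (x, y) \<in> (adj_in E ends S)\<^sup>*)"

definition valence :: "nat \<Rightarrow> 'e set \<Rightarrow> ('e \<Rightarrow> 'v set) \<Rightarrow> (nat \<Rightarrow> 'v) \<Rightarrow> 'v \<Rightarrow> nat" where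
  "valence n E ends leg v =
     2 * card {e\<in>E. ends e = {v}} + card {e\<in>E. v \<in> ends e \<and> card (ends e) = 2}
     + card {i\<in>{1..n}. leg i = v}"

definition stable_graph ::
  "nat \<Rightarrow> nat \<Rightarrow> 'v set \<Rightarrow> 'e set \<Rightarrow> ('e \<Rightarrow> 'v set) \<Rightarrow> ('v \<Rightarrow> nat) \<Rightarrow> (nat \<Rightarrow> 'v) \<Rightarrow> bool" where
  "stable_graph g n V E ends gen leg \<longleftrightarrow>
     finite V \<and> finite E \<and>
     (\<forall>e\<in>E. ends e \<subseteq> V \<and> 1 \<le> card (ends e) \<and> card (ends e) \<le> 2) \<and>
     (\<forall>i\<in>{1..n}. leg i \<in> V) \<and>
     connected_on E ends V \<and>
     int g = (\<Sum>v\<in>V. int (gen v)) + int (card E) - int (card V) + 1 \<and>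
     (\<forall>v\<in>V. 2 * int (gen v) - 2 + int (valence n E ends leg v) > 0)"

definition edges_in :: "'e set \<Rightarrow> ('e \<Rightarrow> 'v set) \<Rightarrow> 'v set \<Rightarrow> 'e set" where
  "edges_in E ends S = {e\<in>E. ends e \<subseteq> S}"

definition cut_edges :: "'v set \<Rightarrow> 'e set \<Rightarrow> ('e \<Rightarrow> 'v set) \<Rightarrow> 'v set \<Rightarrow> 'e set" where
  "cut_edges V E ends S = {e\<in>E. ends e \<inter> S \<noteq> {} \<and> ends e \<inter> (V - S) \<noteq> {}}"

text \<open>A tail, represented by its vertex set.\<close>
definition is_tail :: "'v set \<Rightarrow> 'e set \<Rightarrow> ('e \<Rightarrow> 'v set) \<Rightarrow> 'v set \<Rightarrow> bool" where
  "is_tail V E ends S \<longleftrightarrow> S \<subseteq> V \<and> connected_on E ends S \<and> card (cut_edges V E ends S) = 1"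

end

theory Submission
  imports Defs
begin

text \<open>Split V into the four atoms T1 \<inter> T2, T1 - T2, T2 - T1 and V - (T1 \<union> T2). Every
  edge leaving an atom crosses T1 or T2, so the only edges between atoms are the two cut edges
  c1 and c2, and an atom that is nonempty and proper must contain an end of c1 or c2, because G
  is connected. If T1 and T2 neither nest nor cover V, all four atoms are nonempty. When c1 = c2,
  its at most two ends cannot meet four atoms. Otherwise c1 lies on one side of T2 and c2 on one
  side of T1, and each of the four resulting choices of sides misses one atom. If T1 and T2
  cover V, an edge lying in neither tail must be both c1 and c2 and run from T1 - T2 to T2 - T1,
  and then no edge leaves T1 \<inter> T2.\<close>

lemma cut_edges_nonempty_if_connected:
  assumes "connected_on E ends V" "X \<subseteq> V" "X \<noteq> {}" "X \<noteq> V"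
  shows "cut_edges V E ends X \<noteq> {}"
proof
  assume no_cut: "cut_edges V E ends X = {}"
  obtain x y where "x \<in> X" "y \<in> V" "y \<notin> X" using assms by blast
  have "(x, y) \<in> (adj_in E ends V)\<^sup>*"
    using assms(1,2) \<open>x \<in> X\<close> \<open>y \<in> V\<close> unfolding connected_on_def by blast
  then have "y \<in> X"
  proof (induction rule: rtrancl_induct)
    case base
    show ?case using \<open>x \<in> X\<close> .
  next
    case (step z w)
    then obtain e where "e \<in> E" "ends e = {z, w}" "w \<in> V"
      unfolding adj_in_def by blast
    with step.IH no_cut show ?case unfolding cut_edges_def by blast
  qed
  with \<open>y \<notin> X\<close> show False ..
qed

lemma cut_edges_Int_subset:
  "cut_edges V E ends (S \<inter> T) \<subseteq> cut_edges V E ends S \<union> cut_edges V E ends T"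
  unfolding cut_edges_def by blast

lemma cut_edges_complement:
  assumes "S \<subseteq> V"
  shows "cut_edges V E ends (V - S) = cut_edges V E ends S"
  using assms unfolding cut_edges_def by blast

lemma cut_edges_atom_subset:
  assumes "S \<subseteq> V" "T \<subseteq> V" "X \<in> {S \<inter> T, S - T, T - S, V - (S \<union> T)}"
  shows "cut_edges V E ends X \<subseteq> cut_edges V E ends S \<union> cut_edges V E ends T"
proof -
  have "S - T = S \<inter> (V - T)" "T - S = (V - S) \<inter> T" "V - (S \<union> T) = (V - S) \<inter> (V - T)"
    using assms(1,2) by blast+
  then have "\<exists>S' T'. X = S' \<inter> T' \<and> S' \<in> {S, V - S} \<and> T' \<in> {T, V - T}"
    using assms(3) by auto
  then show ?thesis
    using cut_edges_Int_subset[of V E ends] cut_edges_complement[OF assms(1), of E ends]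
      cut_edges_complement[OF assms(2), of E ends]
    by fastforce
qed

lemma card_ge_3_if_meets_disjoint:
  assumes "finite A" "A \<inter> X \<noteq> {}" "A \<inter> Y \<noteq> {}" "A \<inter> Z \<noteq> {}"
    and "X \<inter> Y = {}" "X \<inter> Z = {}" "Y \<inter> Z = {}"
  shows "3 \<le> card A"
proof -
  obtain x y z where "x \<in> A \<inter> X" "y \<in> A \<inter> Y" "z \<in> A \<inter> Z" using assms(2-4) by blast
  then have "x \<noteq> y" "x \<noteq> z" "y \<noteq> z" using assms(5-7) by blast+
  then have "card {x, y, z} = 3" by simp
  moreover have "{x, y, z} \<subseteq> A" using \<open>x \<in> A \<inter> X\<close> \<open>y \<in> A \<inter> Y\<close> \<open>z \<in> A \<inter> Z\<close> by blast
  ultimately show ?thesis using card_mono[OF assms(1)] by metis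
qed

lemma one_edge_cuts_cover_atoms:
  assumes "connected_on E ends V" "S \<subseteq> V" "T \<subseteq> V"
    and "cut_edges V E ends S = {c}" "cut_edges V E ends T = {d}"
    and "X \<in> {S \<inter> T, S - T, T - S, V - (S \<union> T)}" "X \<noteq> {}" "X \<noteq> V"
  shows "ends c \<inter> X \<noteq> {} \<or> ends d \<inter> X \<noteq> {}"
proof -
  have "X \<subseteq> V" using assms(2,3,6) by auto
  then obtain e where "e \<in> cut_edges V E ends X"
    using cut_edges_nonempty_if_connected[OF assms(1)] assms(7,8) by blast
  moreover have "e = c \<or> e = d"
    using calculation cut_edges_atom_subset[OF assms(2,3,6), of E ends] assms(4,5) by auto
  ultimately show ?thesis unfolding cut_edges_def by blast
qed

lemma ends_subset_side_if_not_cut: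
  assumes "e \<in> E" "ends e \<subseteq> V" "e \<notin> cut_edges V E ends S"
  shows "ends e \<subseteq> S \<or> ends e \<subseteq> V - S"
  using assms unfolding cut_edges_def by auto

lemma one_edge_cuts_not_crossing:
  assumes "connected_on E ends V"
    and ends: "\<forall>e\<in>E. ends e \<subseteq> V \<and> 1 \<le> card (ends e) \<and> card (ends e) \<le> 2"
    and "S \<subseteq> V" "T \<subseteq> V" "cut_edges V E ends S = {c}" "cut_edges V E ends T = {d}"
    and atoms: "S \<inter> T \<noteq> {}" "S - T \<noteq> {}" "T - S \<noteq> {}" "V - (S \<union> T) \<noteq> {}"
  shows False
proof -
  have cover: "ends c \<inter> X \<noteq> {} \<or> ends d \<inter> X \<noteq> {}"
    if "X \<in> {S \<inter> T, S - T, T - S, V - (S \<union> T)}" for X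
  proof (rule one_edge_cuts_cover_atoms[OF assms(1,3-6) that])
    show "X \<noteq> {}" "X \<noteq> V" using that atoms assms(3,4) by auto
  qed
  have "c \<in> E" "d \<in> E" using assms(5,6) unfolding cut_edges_def by blast+
  show False
  proof (cases "c = d")
    case True
    have "3 \<le> card (ends c)"
    proof (rule card_ge_3_if_meets_disjoint)
      show "finite (ends c)" using ends \<open>c \<in> E\<close> by (metis card.infinite not_one_le_zero)
      show "ends c \<inter> (S \<inter> T) \<noteq> {}" "ends c \<inter> (S - T) \<noteq> {}" "ends c \<inter> (T - S) \<noteq> {}"
        using cover True by blast+
    qed auto
    with ends \<open>c \<in> E\<close> show False by auto
  next
    case False
    with assms(5,6) have "c \<notin> cut_edges V E ends T" "d \<notin> cut_edges V E ends S" by auto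
    then have "ends c \<subseteq> T \<or> ends c \<subseteq> V - T" "ends d \<subseteq> S \<or> ends d \<subseteq> V - S"
      using ends \<open>c \<in> E\<close> \<open>d \<in> E\<close> ends_subset_side_if_not_cut by metis+
    then show False
    proof (elim disjE)
      assume "ends c \<subseteq> T" "ends d \<subseteq> S"
      with cover[of "V - (S \<union> T)"] show False by blast
    next
      assume "ends c \<subseteq> T" "ends d \<subseteq> V - S"
      with cover[of "S - T"] show False by blast
    next
      assume "ends c \<subseteq> V - T" "ends d \<subseteq> S"
      with cover[of "T - S"] show False by blast
    next
      assume "ends c \<subseteq> V - T" "ends d \<subseteq> V - S"
      with cover[of "S \<inter> T"] show False by blast
    qed
  qed
qed

lemma edges_in_Un_eq_if_one_edge_cuts_cover:
  assumes "connected_on E ends V"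
    and ends: "\<forall>e\<in>E. ends e \<subseteq> V \<and> 1 \<le> card (ends e) \<and> card (ends e) \<le> 2"
    and "S \<subseteq> V" "T \<subseteq> V" "cut_edges V E ends S = {c}" "cut_edges V E ends T = {d}"
    and "S \<union> T = V" "S \<inter> T \<noteq> {}" "S - T \<noteq> {}"
  shows "edges_in E ends S \<union> edges_in E ends T = E"
proof (rule ccontr)
  assume "edges_in E ends S \<union> edges_in E ends T \<noteq> E"
  then obtain e where e: "e \<in> E" "ends e \<inter> (T - S) \<noteq> {}" "ends e \<inter> (S - T) \<noteq> {}"
    using ends assms(7) unfolding edges_in_def by blast
  then have "e = c" "e = d" using assms(5-7) unfolding cut_edges_def by blast+
  have "ends e \<inter> (S \<inter> T) = {}"
  proof (rule ccontr)
    assume "ends e \<inter> (S \<inter> T) \<noteq> {}"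
    moreover have "finite (ends e)" using ends e(1) by (metis card.infinite not_one_le_zero)
    ultimately have "3 \<le> card (ends e)"
      using card_ge_3_if_meets_disjoint[of "ends e" "S \<inter> T" "T - S" "S - T"] e(2,3) by blast
    with ends e(1) show False by auto
  qed
  moreover have "ends c \<inter> (S \<inter> T) \<noteq> {} \<or> ends d \<inter> (S \<inter> T) \<noteq> {}"
    using assms(3,8,9) by (intro one_edge_cuts_cover_atoms[OF assms(1,3-6)]) auto
  ultimately show False using \<open>e = c\<close> \<open>e = d\<close> by blast
qed

theorem lemma4p13:
  fixes g n :: nat and V :: "'v set" and E :: "'e set" and ends :: "'e \<Rightarrow> 'v set"
    and gen :: "'v \<Rightarrow> nat" and leg :: "nat \<Rightarrow> 'v" and T1 T2 :: "'v set"
  assumes "n \<ge> 1"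
    and "stable_graph g n V E ends gen leg"
    and "is_tail V E ends T1" and "is_tail V E ends T2"
    and "T1 \<inter> T2 \<noteq> {}"
  shows "T1 \<subseteq> T2 \<or> T2 \<subseteq> T1 \<or>
         (T1 \<union> T2 = V \<and> edges_in E ends T1 \<union> edges_in E ends T2 = E)"
proof -
  have graph: "connected_on E ends V"
    "\<forall>e\<in>E. ends e \<subseteq> V \<and> 1 \<le> card (ends e) \<and> card (ends e) \<le> 2"
    using assms(2) unfolding stable_graph_def by auto
  have "T1 \<subseteq> V" "T2 \<subseteq> V" using assms(3,4) unfolding is_tail_def by auto
  obtain c1 c2 where "cut_edges V E ends T1 = {c1}" "cut_edges V E ends T2 = {c2}"
    using assms(3,4) unfolding is_tail_def by (meson card_1_singletonE)
  note one_edge_cuts = graph \<open>T1 \<subseteq> V\<close> \<open>T2 \<subseteq> V\<close> this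
  consider "T1 \<subseteq> T2" | "T2 \<subseteq> T1" | "T1 - T2 \<noteq> {}" "T2 - T1 \<noteq> {}" by blast
  then show ?thesis
  proof cases
    case 3
    have "T1 \<union> T2 = V"
      using one_edge_cuts_not_crossing[OF one_edge_cuts assms(5) 3] \<open>T1 \<subseteq> V\<close> \<open>T2 \<subseteq> V\<close>
      by blast
    with edges_in_Un_eq_if_one_edge_cuts_cover[OF one_edge_cuts _ assms(5) 3(1)] show ?thesis by blast
  qed blast+
qed

end
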